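(* For every rule of G3lp with premises $S_1,\dots,S_k$ ($k\ge 0$) and conclusion $S$: if each forgetful projection $S_i^\circ$ is derivable in G3s + $(\Box\mathrm{Cut})$, then $S^\circ$ is derivable in G3s + $(\Box\mathrm{Cut})$. That is, the forgetful projection of every G3lp rule is admissible in G3s + $(\Box\mathrm{Cut})$.
   Context: S4 formulas: $A ::= \bot \mid P \mid A_0\to A_1 \mid \Box A$ ($P$ atomic). LP terms: $t ::= c \mid x \mid t_0\cdot t_1 \mid t_0+t_1 \mid\ !t$ ($c$ constants, $x$ variables); LP formulas: $A ::= \bot \mid P \mid A_0\to A_1 \mid t{:}A$. Axioms of LP: A0 a finite set of axiom schemes of classical propositional logic; A1 $t{:}F\to F$; A2 $s{:}(F\to G)\to(t{:}F\to (s\cdot t){:}G)$; A3 $t{:}F\to\ !t{:}(t{:}F)$; A4 $s{:}F\to(s+t){:}F$ and $t{:}F\to(s+t){:}F$. Forgetful projection: $\bot^\circ=\bot$, $P^\circ=P$, $(A\to B)^\circ=A^\circ\to B^\circ$, $(t{:}A)^\circ=\Box A^\circ$, extended to multisets and sequents componentwise. Sequents $\Gamma\supset\Delta$ use finite multisets; $\Box\Gamma:=\{\Box B\mid B\in\Gamma\}$. G3s rules: (Ax) $P,\Gamma\supset\Delta,P$ ($P$ atomic); $(\bot\supset)$ $\bot,\Gamma\supset\Delta$; $(\to\supset)$ from $\Gamma\supset\Delta,A$ and $B,\Gamma\supset\Delta$ infer $A\to B,\Gamma\supset\Delta$; $(\supset\to)$ from $A,\Gamma\supset\Delta,B$ infer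 $\Gamma\supset\Delta,A\to B$; $(\Box\supset)$ from $A,\Box A,\Gamma\supset\Delta$ infer $\Box A,\Gamma\supset\Delta$; $(\supset\Box)$ from $\Box\Gamma\supset A$ infer $\Gamma',\Box\Gamma\supset\Delta',\Box A$. The rule $(\Box\mathrm{Cut})$: from $\Gamma\supset\Delta,\Box A,\Box B$ and $\Gamma\supset\Delta,\Box(A\to B),\Box B$ infer $\Gamma\supset\Delta,\Box B$. G3lp has the rules (Ax), $(\bot\supset)$, $(\to\supset)$, $(\supset\to)$ (for LP formulas) and: $(\supset{:})_c$ from $\supset A$ infer $\Gamma\supset\Delta,c{:}A$, where $A$ is an axiom A0–A4 and $c$ a constant; $(\supset{:})_t$ from $t{:}A\supset A$ infer $t{:}A,\Gamma\supset\Delta,t{:}A$; $({:}\supset)$ from $A,t{:}A,\Gamma\supset\Delta$ infer $t{:}A,\Gamma\supset\Delta$; $(\supset !)$ from $\Gamma\supset\Delta,t{:}A,\,!t{:}t{:}A$ infer $\Gamma\supset\Delta,\,!t{:}t{:}A$; $(\supset +)$ from $\Gamma\supset\Delta,s{:}A,t{:}A,(s+t){:}A$ infer $\Gamma\supset\Delta,(s+t){:}A$; $(\supset\cdot)$ from $\Gamma\supset\Delta,s{:}(A\to B),(s\cdot t){:}B$ and $\Gamma\supset\Delta,t{:}A,(s\cdot t){:}B$ infer $\Gamma\supset\Delta,(s\cdot t){:}B$. *)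

theory Defs
  imports Main "HOL-Library.Multiset"
begin

datatype 'p fm = Bot | Atom 'p | Imp "'p fm" "'p fm" | Box "'p fm"

datatype ('c, 'v) tm = Const 'c | Var 'v | App "('c, 'v) tm" "('c, 'v) tm"
  | Plus "('c, 'v) tm" "('c, 'v) tm" | Bang "('c, 'v) tm"

datatype ('p, 'c, 'v) lfm = LBot | LAtom 'p | LImp "('p, 'c, 'v) lfm" "('p, 'c, 'v) lfm"
  | Just "('c, 'v) tm" "('p, 'c, 'v) lfm"

type_synonym 'f seq = "'f multiset \<times> 'f multiset"

inductive lp_A0 :: "('p, 'c, 'v) lfm \<Rightarrow> bool" where
  K: "lp_A0 (LImp A (LImp B A))"
| S: "lp_A0 (LImp (LImp A (LImp B C)) (LImp (LImp A B) (LImp A C)))"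
| DN: "lp_A0 (LImp (LImp (LImp A LBot) LBot) A)"

inductive lp_axiom :: "('p, 'c, 'v) lfm \<Rightarrow> bool" where
  A0: "lp_A0 A \<Longrightarrow> lp_axiom A"
| A1: "lp_axiom (LImp (Just t F) F)"
| A2: "lp_axiom (LImp (Just s (LImp F G)) (LImp (Just t F) (Just (App s t) G)))"
| A3: "lp_axiom (LImp (Just t F) (Just (Bang t) (Just t F)))"
| A4a: "lp_axiom (LImp (Just s F) (Just (Plus s t) F))"
| A4b: "lp_axiom (LImp (Just t F) (Just (Plus s t) F))"

fun forget :: "('p, 'c, 'v) lfm \<Rightarrow> 'p fm" where
  "forget LBot = Bot"
| "forget (LAtom P) = Atom P"
| "forget (LImp A B) = Imp (forget A) (forget B)"
| "forget (Just t A) = Box (forget A)"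

definition forget_seq :: "('p, 'c, 'v) lfm seq \<Rightarrow> 'p fm seq" where
  "forget_seq S = (image_mset forget (fst S), image_mset forget (snd S))"

inductive g3s_boxcut :: "'p fm multiset \<Rightarrow> 'p fm multiset \<Rightarrow> bool" where
  Ax: "g3s_boxcut (add_mset (Atom P) \<Gamma>) (add_mset (Atom P) \<Delta>)"
| BotL: "g3s_boxcut (add_mset Bot \<Gamma>) \<Delta>"
| ImpL: "g3s_boxcut \<Gamma> (add_mset A \<Delta>) \<Longrightarrow> g3s_boxcut (add_mset B \<Gamma>) \<Delta>
          \<Longrightarrow> g3s_boxcut (add_mset (Imp A B) \<Gamma>) \<Delta>"
| ImpR: "g3s_boxcut (add_mset A \<Gamma>) (add_mset B \<Delta>) \<Longrightarrow> g3s_boxcut \<Gamma> (add_mset (Imp A B) \<Delta>)"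
| BoxL: "g3s_boxcut (add_mset A (add_mset (Box A) \<Gamma>)) \<Delta> \<Longrightarrow> g3s_boxcut (add_mset (Box A) \<Gamma>) \<Delta>"
| BoxR: "g3s_boxcut (image_mset Box \<Gamma>) {#A#}
          \<Longrightarrow> g3s_boxcut (\<Gamma>' + image_mset Box \<Gamma>) (add_mset (Box A) \<Delta>')"
| BoxCut: "g3s_boxcut \<Gamma> (\<Delta> + {#Box A, Box B#})
          \<Longrightarrow> g3s_boxcut \<Gamma> (\<Delta> + {#Box (Imp A B), Box B#})
          \<Longrightarrow> g3s_boxcut \<Gamma> (add_mset (Box B) \<Delta>)"

definition g3s_derivable :: "'p fm seq \<Rightarrow> bool" where
  "g3s_derivable S = g3s_boxcut (fst S) (snd S)"

inductive g3lp_rule :: "('p, 'c, 'v) lfm seq list \<Rightarrow> ('p, 'c, 'v) lfm seq \<Rightarrow> bool" where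
  Ax: "g3lp_rule [] (add_mset (LAtom P) \<Gamma>, add_mset (LAtom P) \<Delta>)"
| BotL: "g3lp_rule [] (add_mset LBot \<Gamma>, \<Delta>)"
| ImpL: "g3lp_rule [(\<Gamma>, add_mset A \<Delta>), (add_mset B \<Gamma>, \<Delta>)] (add_mset (LImp A B) \<Gamma>, \<Delta>)"
| ImpR: "g3lp_rule [(add_mset A \<Gamma>, add_mset B \<Delta>)] (\<Gamma>, add_mset (LImp A B) \<Delta>)"
| JustR_c: "lp_axiom A \<Longrightarrow> g3lp_rule [({#}, {#A#})] (\<Gamma>, add_mset (Just (Const c) A) \<Delta>)"
| JustR_t: "g3lp_rule [({#Just t A#}, {#A#})] (add_mset (Just t A) \<Gamma>, add_mset (Just t A) \<Delta>)"
| JustL: "g3lp_rule [(add_mset A (add_mset (Just t A) \<Gamma>), \<Delta>)] (add_mset (Just t A) \<Gamma>, \<Delta>)"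
| BangR: "g3lp_rule [(\<Gamma>, \<Delta> + {#Just t A, Just (Bang t) (Just t A)#})]
             (\<Gamma>, add_mset (Just (Bang t) (Just t A)) \<Delta>)"
| PlusR: "g3lp_rule [(\<Gamma>, \<Delta> + {#Just s A, Just t A, Just (Plus s t) A#})]
             (\<Gamma>, add_mset (Just (Plus s t) A) \<Delta>)"
| AppR: "g3lp_rule [(\<Gamma>, \<Delta> + {#Just s (LImp A B), Just (App s t) B#}),
                    (\<Gamma>, \<Delta> + {#Just t A, Just (App s t) B#})]
             (\<Gamma>, add_mset (Just (App s t) B) \<Delta>)"

end

theory Submission
  imports Defs
begin

text \<open>Under the forgetful projection the propositional rules and the rule for \<open>t:A\<close> on
  the left become G3s rules, \<open>c:A\<close> on the right becomes necessitation of a theorem, and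
  \<open>t:A \<supset> A\<close> yields \<open>t:A \<supset> t:A\<close> by the box rule on the right. The rule for \<open>\<cdot>\<close> projects to
  exactly \<open>(\<box>Cut)\<close>. The rules for \<open>+\<close> and \<open>!\<close> project to contractions of boxed formulas
  in the succedent, which \<open>(\<box>Cut)\<close> provides by cutting against \<open>\<box>(A \<rightarrow> A)\<close>; for \<open>!\<close> one
  first replaces \<open>\<box>A\<close> by \<open>\<box>\<box>A\<close> on the right, i.e. the S4 axiom 4 is admissible in the
  succedent. That is shown by induction on derivations, where the only critical case, a
  \<open>(\<box>Cut)\<close> on a formula that gets boxed twice, is repaired with the K axiom.\<close>

lemma add_mset_eq_plus_image_mset_cases:
  assumes "add_mset x D = D0 + image_mset f M"
  obtains D1 where "D0 = add_mset x D1" and "D = D1 + image_mset f M"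
    | C M1 where "x = f C" and "M = add_mset C M1" and "D = D0 + image_mset f M1"
proof (cases "x \<in># D0")
  case True
  then have "D0 = add_mset x (D0 - {#x#})" by simp
  moreover from this have "D = (D0 - {#x#}) + image_mset f M"
    using assms by (metis add_mset_add_single add_right_imp_eq union_mset_add_mset_left)
  ultimately show ?thesis by (rule that(1))
next
  case False
  then have "x \<in># image_mset f M"
    using assms by (metis union_iff union_single_eq_member)
  then obtain C where "C \<in># M" and x: "x = f C" by auto
  then have M: "M = add_mset C (M - {#C#})" by simp
  then have "add_mset x D = add_mset x (D0 + image_mset f (M - {#C#}))"
    using assms x by (metis image_mset_add_mset union_mset_add_mset_right)
  then show ?thesis using that(2)[OF x M] by simp
qed

lemma g3s_boxcut_identity: "g3s_boxcut (add_mset C \<Gamma>) (add_mset C \<Delta>)"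
proof (induction C arbitrary: \<Gamma> \<Delta>)
  case Bot
  show ?case by (rule g3s_boxcut.BotL)
next
  case (Atom P)
  show ?case by (rule g3s_boxcut.Ax)
next
  case (Imp A B)
  have "g3s_boxcut (add_mset (Imp A B) (add_mset A \<Gamma>)) (add_mset B \<Delta>)"
    by (intro g3s_boxcut.ImpL Imp.IH)
  then show ?case
    by (intro g3s_boxcut.ImpR) (simp add: add_mset_commute)
next
  case (Box A)
  have "g3s_boxcut (image_mset Box {#A#}) {#A#}"
    using Box.IH by (simp add: g3s_boxcut.BoxL)
  then show ?case
    using g3s_boxcut.BoxR[of "{#A#}" A \<Gamma> \<Delta>] by simp
qed

lemma g3s_boxcut_K: "g3s_boxcut {#} {#Imp (Box (Imp A B)) (Imp (Box A) (Box B))#}"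
proof -
  have "g3s_boxcut {#Imp A B, A, Box A, Box (Imp A B)#} {#B#}"
    by (intro g3s_boxcut.ImpL g3s_boxcut_identity)
  then have "g3s_boxcut (image_mset Box {#A, Imp A B#}) {#B#}"
    by (metis g3s_boxcut.BoxL add_mset_commute image_mset_add_mset image_mset_empty)
  then have "g3s_boxcut {#Box A, Box (Imp A B)#} {#Box B#}"
    using g3s_boxcut.BoxR[of "{#A, Imp A B#}" B "{#}" "{#}"] by simp
  then show ?thesis
    by (intro g3s_boxcut.ImpR)
qed

lemma g3s_boxcut_weaken_right: "g3s_boxcut \<Gamma> \<Delta> \<Longrightarrow> g3s_boxcut \<Gamma> (\<Delta> + \<Theta>)"
proof (induction rule: g3s_boxcut.induct)
  case (BoxR \<Gamma> A \<Gamma>' \<Delta>')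
  then show ?case using g3s_boxcut.BoxR[of \<Gamma> A \<Gamma>' "\<Delta>' + \<Theta>"] by simp
next
  case (BoxCut \<Gamma> \<Delta> A B)
  then show ?case using g3s_boxcut.BoxCut[of \<Gamma> "\<Delta> + \<Theta>" A B] by (simp add: ac_simps)
qed (auto intro: g3s_boxcut.intros)

lemma g3s_boxcut_necessitation: "g3s_boxcut {#} {#A#} \<Longrightarrow> g3s_boxcut \<Gamma> (add_mset (Box A) \<Delta>)"
  using g3s_boxcut.BoxR[of "{#}" A \<Gamma> \<Delta>] by simp

lemma g3s_boxcut_contract_box_right:
  assumes "g3s_boxcut \<Gamma> (\<Delta> + {#Box A, Box A#})"
  shows "g3s_boxcut \<Gamma> (add_mset (Box A) \<Delta>)"
proof -
  have "g3s_boxcut {#} {#Imp A A#}"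
    by (intro g3s_boxcut.ImpR g3s_boxcut_identity)
  then have "g3s_boxcut \<Gamma> (\<Delta> + {#Box (Imp A A), Box A#})"
    using g3s_boxcut_necessitation[of "Imp A A" \<Gamma> "add_mset (Box A) \<Delta>"] by simp
  with assms show ?thesis by (rule g3s_boxcut.BoxCut)
qed

text \<open>A cut on \<open>Box (Box B)\<close> needs \<open>Box (Imp (Box A) (Box B))\<close>, which a further
  cut obtains from \<open>Box (Box (Imp A B))\<close> and the necessitated K axiom.\<close>
lemma g3s_boxcut_BoxCut_boxed:
  assumes "g3s_boxcut \<Gamma> (\<Delta> + {#Box (Box A), Box (Box B)#})"
    and "g3s_boxcut \<Gamma> (\<Delta> + {#Box (Box (Imp A B)), Box (Box B)#})"
  shows "g3s_boxcut \<Gamma> (add_mset (Box (Box B)) \<Delta>)"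
proof -
  let ?E = "add_mset (Box (Box B)) \<Delta>"
  have "g3s_boxcut \<Gamma> (?E + {#Box (Box (Imp A B)), Box (Imp (Box A) (Box B))#})"
    using g3s_boxcut_weaken_right[OF assms(2), of "{#Box (Imp (Box A) (Box B))#}"]
    by (simp add: add_mset_commute)
  moreover have "g3s_boxcut \<Gamma>
      (?E + {#Box (Imp (Box (Imp A B)) (Imp (Box A) (Box B))), Box (Imp (Box A) (Box B))#})"
    using g3s_boxcut_necessitation[OF g3s_boxcut_K,
        where \<Gamma>=\<Gamma> and \<Delta>="add_mset (Box (Imp (Box A) (Box B))) ?E"]
    by simp
  ultimately have "g3s_boxcut \<Gamma> (add_mset (Box (Imp (Box A) (Box B))) ?E)"
    by (rule g3s_boxcut.BoxCut)
  then have "g3s_boxcut \<Gamma> (\<Delta> + {#Box (Imp (Box A) (Box B)), Box (Box B)#})"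
    by (simp add: add_mset_commute)
  with assms(1) show ?thesis by (rule g3s_boxcut.BoxCut)
qed

lemma g3s_boxcut_double_box_right:
  "g3s_boxcut \<Gamma> (\<Delta> + image_mset Box M) \<Longrightarrow>
   g3s_boxcut \<Gamma> (\<Delta> + image_mset (\<lambda>A. Box (Box A)) M)"
proof (induction \<Gamma> "\<Delta> + image_mset Box M" arbitrary: \<Delta> M rule: g3s_boxcut.induct)
  case (Ax P \<Gamma> \<Delta>')
  then show ?case
    by (elim add_mset_eq_plus_image_mset_cases) (auto intro: g3s_boxcut.Ax)
next
  case (BotL \<Gamma>)
  then show ?case by (rule g3s_boxcut.BotL)
next
  case (ImpL \<Gamma> A B)
  have "g3s_boxcut \<Gamma> (add_mset A \<Delta> + image_mset (\<lambda>A. Box (Box A)) M)"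
    using ImpL.hyps(2)[of "add_mset A \<Delta>" M] by simp
  moreover have "g3s_boxcut (add_mset B \<Gamma>) (\<Delta> + image_mset (\<lambda>A. Box (Box A)) M)"
    using ImpL.hyps(4) by simp
  ultimately show ?case by (simp add: g3s_boxcut.ImpL)
next
  case (ImpR A \<Gamma> B \<Delta>')
  from ImpR.hyps(3) show ?case
  proof (elim add_mset_eq_plus_image_mset_cases)
    fix D1 assume "\<Delta> = add_mset (Imp A B) D1" and "\<Delta>' = D1 + image_mset Box M"
    then show ?case using ImpR.hyps(2)[of "add_mset B D1" M] by (auto intro: g3s_boxcut.ImpR)
  qed simp
next
  case (BoxL A \<Gamma>)
  then show ?case by (auto intro: g3s_boxcut.BoxL)
next
  case (BoxR \<Gamma> A \<Gamma>' \<Delta>')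
  from BoxR.hyps(3) show ?case
  proof (elim add_mset_eq_plus_image_mset_cases)
    fix D1 assume "\<Delta> = add_mset (Box A) D1"
    then show ?case
      using g3s_boxcut.BoxR[OF BoxR.hyps(1), of \<Gamma>' "D1 + image_mset (\<lambda>A. Box (Box A)) M"] by simp
  next
    fix C M1 assume "Box A = Box C" and M: "M = add_mset C M1"
    have "g3s_boxcut (image_mset Box \<Gamma>) {#Box A#}"
      using g3s_boxcut.BoxR[OF BoxR.hyps(1), of "{#}" "{#}"] by simp
    then show ?case
      using g3s_boxcut.BoxR[of \<Gamma> "Box A" \<Gamma>' "\<Delta> + image_mset (\<lambda>A. Box (Box A)) M1"] M \<open>Box A = Box C\<close>
      by simp
  qed
next
  case (BoxCut \<Gamma> \<Delta>' A B)
  from BoxCut.hyps(5) show ?case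
  proof (elim add_mset_eq_plus_image_mset_cases)
    fix D1 assume D1: "\<Delta> = add_mset (Box B) D1" "\<Delta>' = D1 + image_mset Box M"
    have "g3s_boxcut \<Gamma> ((D1 + image_mset (\<lambda>A. Box (Box A)) M) + {#Box A, Box B#})"
      using BoxCut.hyps(2)[of "D1 + {#Box A, Box B#}" M] D1 by (simp add: ac_simps)
    moreover have "g3s_boxcut \<Gamma> ((D1 + image_mset (\<lambda>A. Box (Box A)) M) + {#Box (Imp A B), Box B#})"
      using BoxCut.hyps(4)[of "D1 + {#Box (Imp A B), Box B#}" M] D1 by (simp add: ac_simps)
    ultimately show ?case using D1 g3s_boxcut.BoxCut by fastforce
  next
    fix C M1 assume "Box B = Box C" and M1: "M = add_mset C M1" "\<Delta>' = \<Delta> + image_mset Box M1"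
    let ?D = "\<Delta> + image_mset (\<lambda>A. Box (Box A)) M1"
    have "g3s_boxcut \<Gamma> (?D + {#Box (Box A), Box (Box B)#})"
      using BoxCut.hyps(2)[of \<Delta> "M1 + {#A, B#}"] M1 by (simp add: ac_simps)
    moreover have "g3s_boxcut \<Gamma> (?D + {#Box (Box (Imp A B)), Box (Box B)#})"
      using BoxCut.hyps(4)[of \<Delta> "M1 + {#Imp A B, B#}"] M1 by (simp add: ac_simps)
    ultimately show ?case
      using g3s_boxcut_BoxCut_boxed M1 \<open>Box B = Box C\<close> by fastforce
  qed
qed

lemma g3s_boxcut_BangR_admissible:
  assumes "g3s_boxcut \<Gamma> (\<Delta> + {#Box A, Box (Box A)#})"
  shows "g3s_boxcut \<Gamma> (add_mset (Box (Box A)) \<Delta>)"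
proof -
  have "g3s_boxcut \<Gamma> (\<Delta> + {#Box (Box A), Box (Box A)#})"
    using assms g3s_boxcut_double_box_right[of \<Gamma> "add_mset (Box (Box A)) \<Delta>" "{#A#}"]
    by (simp add: add_mset_commute)
  then show ?thesis by (rule g3s_boxcut_contract_box_right)
qed

lemma g3s_boxcut_PlusR_admissible:
  assumes "g3s_boxcut \<Gamma> (\<Delta> + {#Box A, Box A, Box A#})"
  shows "g3s_boxcut \<Gamma> (add_mset (Box A) \<Delta>)"
proof -
  have "g3s_boxcut \<Gamma> (\<Delta> + {#Box A, Box A#})"
    using assms g3s_boxcut_contract_box_right[of \<Gamma> "add_mset (Box A) \<Delta>" A] by simp
  then show ?thesis by (rule g3s_boxcut_contract_box_right)
qed

lemma g3s_derivable_forget_seq_iff: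
  "g3s_derivable (forget_seq (\<Gamma>, \<Delta>)) \<longleftrightarrow> g3s_boxcut (image_mset forget \<Gamma>) (image_mset forget \<Delta>)"
  by (simp add: g3s_derivable_def forget_seq_def)

theorem mainTheorem2:
  fixes prems :: "('p, 'c, 'v) lfm seq list" and concl :: "('p, 'c, 'v) lfm seq"
  assumes "g3lp_rule prems concl"
    and "\<forall>S \<in> set prems. g3s_derivable (forget_seq S)"
  shows "g3s_derivable (forget_seq concl)"
  using assms
proof (cases rule: g3lp_rule.cases)
  case (JustR_c A \<Gamma> c \<Delta>)
  then show ?thesis
    using assms(2) by (simp add: g3s_derivable_forget_seq_iff g3s_boxcut_necessitation)
next
  case (JustR_t t A \<Gamma> \<Delta>)
  then show ?thesis
    using assms(2) g3s_boxcut.BoxR[of "{#forget A#}"] by (simp add: g3s_derivable_forget_seq_iff)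
next
  case (BangR \<Gamma> \<Delta> t A)
  then show ?thesis
    using assms(2) by (simp add: g3s_derivable_forget_seq_iff g3s_boxcut_BangR_admissible)
next
  case (PlusR \<Gamma> \<Delta> s A t)
  then show ?thesis
    using assms(2) by (simp add: g3s_derivable_forget_seq_iff g3s_boxcut_PlusR_admissible)
next
  case (AppR \<Gamma> \<Delta> s A B t)
  then show ?thesis
    using assms(2) g3s_boxcut.BoxCut[of _ "image_mset forget \<Delta>" "forget A" "forget B"]
    by (simp add: g3s_derivable_forget_seq_iff)
qed (use assms(2) in \<open>auto simp: g3s_derivable_forget_seq_iff intro: g3s_boxcut.intros\<close>)

end
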